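(* Let $H:2^M\to\mathbb{R}$ be a function with $H(\emptyset)=0$, and let $T^1,\dots,T^n\subseteq M$ satisfy $\bigcap_{i=1}^nT^i=\emptyset$. Suppose that either (1) $H$ is supermodular, or (2) for every $1\le i,j\le n$, $T^i\cup T^j\in\{T^i,T^j\}$. Then $$\sum_{i=1}^nH(T^i)\le\sum_{i=1}^{n-1}H\Big(T^{i+1}\cup\bigcap_{\ell=1}^{i}T^\ell\Big).$$
   Context: $M$ is a finite set. A function $H:2^M\to\mathbb R$ is supermodular if $H(S)+H(T)\le H(S\cup T)+H(S\cap T)$ for all $S,T\subseteq M$. *)

theory Defs
  imports Complex_Main
begin

definition supermodular :: "'a set \<Rightarrow> ('a set \<Rightarrow> real) \<Rightarrow> bool" where
  "supermodular M H \<longleftrightarrow>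
     (\<forall>S U. S \<subseteq> M \<longrightarrow> U \<subseteq> M \<longrightarrow> H S + H U \<le> H (S \<union> U) + H (S \<inter> U))"

end

theory Submission
  imports Defs
begin

text \<open>With \<open>P i = T 1 \<inter> \<dots> \<inter> T i\<close>, each term satisfies the exchange inequality
  \<open>H (P i) + H (T (i+1)) \<le> H (T (i+1) \<union> P i) + H (P (i+1))\<close>: under supermodularity directly,
  and in the nested case with equality, because \<open>P i\<close> is one of the \<open>T j\<close> and hence comparable
  with \<open>T (i+1)\<close>. Summing telescopes to the claim, since \<open>P 1 = T 1\<close> and \<open>H (P n) = H {} = 0\<close>.\<close>

lemma INT_atLeastAtMost_Suc:
  "(\<Inter>l\<in>{1..Suc i}. T l) = (\<Inter>l\<in>{1..i}. T l) \<inter> T (Suc i)"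
  by (auto simp: atLeastAtMostSuc_conv)

lemma comparable_sets_modular:
  fixes H :: "'a set \<Rightarrow> 'b::ab_semigroup_add"
  assumes "A \<union> B \<in> {A, B}"
  shows "H A + H B = H (A \<union> B) + H (A \<inter> B)"
proof -
  from assms have "A \<union> B = A \<and> A \<inter> B = B \<or> A \<union> B = B \<and> A \<inter> B = A"
    by blast
  then show ?thesis by (auto simp: add.commute)
qed

lemma supermodularD:
  "supermodular M H \<Longrightarrow> A \<subseteq> M \<Longrightarrow> B \<subseteq> M \<Longrightarrow> H A + H B \<le> H (A \<union> B) + H (A \<inter> B)"
  unfolding supermodular_def by blast

lemma nested_INT_eq_member:
  fixes T :: "nat \<Rightarrow> 'a set"
  assumes nested: "\<forall>i\<in>{1..n}. \<forall>j\<in>{1..n}. T i \<union> T j \<in> {T i, T j}"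
    and "1 \<le> k" "k \<le> n"
  shows "\<exists>j\<in>{1..k}. (\<Inter>l\<in>{1..k}. T l) = T j"
  using \<open>1 \<le> k\<close> \<open>k \<le> n\<close>
proof (induction k rule: dec_induct)
  case base
  then show ?case by simp
next
  case (step k)
  then obtain j where j: "j \<in> {1..k}" "(\<Inter>l\<in>{1..k}. T l) = T j"
    by auto
  have "T j \<union> T (Suc k) \<in> {T j, T (Suc k)}"
    using nested j step.prems by auto
  then have "T j \<inter> T (Suc k) = T j \<or> T j \<inter> T (Suc k) = T (Suc k)"
    by blast
  with j step.hyps(1) show ?case
    unfolding INT_atLeastAtMost_Suc by force
qed

lemma sum_telescoping_le:
  fixes t u p :: "nat \<Rightarrow> real"
  assumes exchange: "\<And>i. 1 \<le> i \<Longrightarrow> i < k \<Longrightarrow> p i + t (Suc i) \<le> u i + p (Suc i)"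
    and "1 \<le> k"
  shows "(\<Sum>i=1..k. t i) \<le> t 1 - p 1 + (\<Sum>i=1..k-1. u i) + p k"
  using \<open>1 \<le> k\<close> exchange
proof (induction k rule: dec_induct)
  case base
  then show ?case by simp
next
  case (step k)
  have "(\<Sum>i=1..k-1. u i) + u k = (\<Sum>i=1..Suc k - 1. u i)"
    using step.hyps(1) by (cases k) auto
  with step show ?case by fastforce
qed

theorem claim4p4:
  fixes M :: "'a set" and H :: "'a set \<Rightarrow> real" and T :: "nat \<Rightarrow> 'a set" and n :: nat
  assumes "finite M"
    and "H {} = 0"
    and "\<forall>i\<in>{1..n}. T i \<subseteq> M"
    and "(\<Inter>i\<in>{1..n}. T i) = {}"
    and "supermodular M H \<or> (\<forall>i\<in>{1..n}. \<forall>j\<in>{1..n}. T i \<union> T j \<in> {T i, T j})"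
  shows "(\<Sum>i=1..n. H (T i)) \<le> (\<Sum>i=1..n-1. H (T (i+1) \<union> (\<Inter>l\<in>{1..i}. T l)))"
proof (cases "n = 0")
  case False
  define P where "P i = (\<Inter>l\<in>{1..i}. T l)" for i
  have "H (P i) + H (T (Suc i)) \<le> H (T (Suc i) \<union> P i) + H (P (Suc i))"
    if "1 \<le> i" "i < n" for i
  proof -
    have "H (P i) + H (T (Suc i)) \<le> H (P i \<union> T (Suc i)) + H (P i \<inter> T (Suc i))"
    proof (cases "supermodular M H")
      case True
      have "P i \<subseteq> T 1" "T 1 \<subseteq> M" "T (Suc i) \<subseteq> M"
        using assms(3) that unfolding P_def by auto
      with True show ?thesis by (blast intro: supermodularD)
    next
      case False
      with assms(5) nested_INT_eq_member[of n T i] that obtain j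
        where "j \<in> {1..i}" "P i = T j" "\<forall>i\<in>{1..n}. \<forall>j\<in>{1..n}. T i \<union> T j \<in> {T i, T j}"
        unfolding P_def by fastforce
      with that show ?thesis by (simp add: comparable_sets_modular)
    qed
    then show ?thesis unfolding P_def INT_atLeastAtMost_Suc by (simp add: Un_commute)
  qed
  then have "(\<Sum>i=1..n. H (T i)) \<le> H (T 1) - H (P 1) + (\<Sum>i=1..n-1. H (T (Suc i) \<union> P i)) + H (P n)"
    using False by (intro sum_telescoping_le) auto
  then show ?thesis using assms(2,4) by (simp add: P_def)
qed simp

end
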